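(* Let $G=(g_1,\dots,g_k)\in\mathbb{N}_0^k$ be telescopic with $g_1>0$ and $c(G)=(c_2,\dots,c_k)$, and let $h_j=c_jg_j$ for $2\le j\le k$. Then $G$ is minimal if and only if $g_i\ne h_j$ for all $i\in\{1,\dots,k\}$ and all $j\in\{2,\dots,k\}$.
   Context: For $G=(g_1,\dots,g_k)\in\mathbb{N}_0^k$, $\langle G\rangle$ is the set of $\mathbb{N}_0$-linear combinations of its entries; $G$ is minimal if $\langle G''\rangle\ne\langle G\rangle$ for every proper subsequence $G''$. Let $G_i=(g_1,\dots,g_i)$, $d_i=\gcd(G_i)$, $c_j=d_{j-1}/d_j$ for $2\le j\le k$ (well defined since $g_1>0$). $G$ is telescopic if $c_jg_j\in\langle G_{j-1}\rangle$ for all $2\le j\le k$. *)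

theory Defs
  imports Main "HOL-Library.Sublist"
begin

text \<open>Sequences G = (g_1,...,g_k) are lists of naturals; g_i = G ! (i - 1).\<close>

definition gen :: "nat list \<Rightarrow> nat set" where
  "gen G = {(\<Sum>i<length G. a i * G ! i) | a :: nat \<Rightarrow> nat. True}"

definition minimal_gens :: "nat list \<Rightarrow> bool" where
  "minimal_gens G \<longleftrightarrow> (\<forall>G''. subseq G'' G \<and> G'' \<noteq> G \<longrightarrow> gen G'' \<noteq> gen G)"

definition dgcd :: "nat list \<Rightarrow> nat \<Rightarrow> nat" where
  "dgcd G i = Gcd (set (take i G))"

definition cc :: "nat list \<Rightarrow> nat \<Rightarrow> nat" where
  "cc G j = dgcd G (j - 1) div dgcd G j"

definition telescopic :: "nat list \<Rightarrow> bool" where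
  "telescopic G \<longleftrightarrow> (\<forall>j\<in>{2..length G}. cc G j * G ! (j - 1) \<in> gen (take (j - 1) G))"

end

theory Submission
  imports Defs
begin

text \<open>
  Minimality means that no entry lies in the semigroup generated by the others.
  If h_j = g_i with i \<noteq> j, then g_i is a multiple of g_j; if h_j = g_j, then g_j = 0 or
  c_j = 1, and then g_j is generated by g_1, ..., g_(j-1) by the telescopic condition.

  Conversely, induct on the length: append the last entry x to a minimal telescopic
  sequence with gcd d and let c = d / gcd d x, so h = c x. The entry x is redundant only if
  d divides x, which forces x = h. An old entry g that becomes redundant satisfies
  g = r + a x with r generated by the other old entries; d divides a x, so c divides a.
  The telescopic condition writes h = b g + s with s generated by the other old entries.
  If a = 0 or b = 0, g was redundant already; otherwise g \<le> h \<le> a x \<le> g, so g = h.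
\<close>

lemma gen_Nil [simp]: "gen [] = {0}"
  by (simp add: gen_def)

lemma gen_Cons: "gen (x # xs) = {t * x + a | t a. a \<in> gen xs}"
proof (intro set_eqI iffI)
  fix y assume "y \<in> gen (x # xs)"
  then obtain a where y: "y = (\<Sum>i<Suc (length xs). a i * (x # xs) ! i)"
    by (auto simp: gen_def)
  have "y = a 0 * x + (\<Sum>i<length xs. a (Suc i) * xs ! i)"
    unfolding y sum.lessThan_Suc_shift by simp
  moreover have "(\<Sum>i<length xs. a (Suc i) * xs ! i) \<in> gen xs"
    unfolding gen_def by (rule CollectI, rule exI[where x="\<lambda>i. a (Suc i)"], simp)
  ultimately show "y \<in> {t * x + a | t a. a \<in> gen xs}" by blast
next
  fix y assume "y \<in> {t * x + a | t a. a \<in> gen xs}"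
  then obtain t b where y: "y = t * x + (\<Sum>i<length xs. b i * xs ! i)"
    by (auto simp: gen_def)
  have "y = (\<Sum>i<length (x # xs). case_nat t b i * (x # xs) ! i)"
    unfolding y length_Cons sum.lessThan_Suc_shift by simp
  then show "y \<in> gen (x # xs)" unfolding gen_def by blast
qed

lemma zero_in_gen [simp]: "0 \<in> gen xs"
  by (induction xs) (auto simp: gen_Cons)

lemma gen_add: "a \<in> gen xs \<Longrightarrow> b \<in> gen xs \<Longrightarrow> a + b \<in> gen xs"
proof (induction xs arbitrary: a b)
  case (Cons x xs)
  from Cons.prems obtain t1 a1 t2 a2 where "a = t1 * x + a1" "a1 \<in> gen xs"
    "b = t2 * x + a2" "a2 \<in> gen xs" by (auto simp: gen_Cons)
  with Cons.IH[of a1 a2] have "a + b = (t1 + t2) * x + (a1 + a2)" "a1 + a2 \<in> gen xs"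
    by (auto simp: algebra_simps)
  then show ?case by (auto simp: gen_Cons)
qed simp

lemma gen_mult: "a \<in> gen xs \<Longrightarrow> t * a \<in> gen xs"
  by (induction t) (auto simp: gen_add)

lemma gen_append: "gen (xs @ ys) = {a + b | a b. a \<in> gen xs \<and> b \<in> gen ys}"
proof (induction xs)
  case (Cons x xs)
  show ?case
    unfolding append_Cons gen_Cons Cons.IH by (rule set_eqI, auto, metis add.assoc, metis add.assoc)
qed simp

lemma gen_append_commute: "gen (xs @ ys) = gen (ys @ xs)"
  unfolding gen_append by (blast intro: add.commute)

lemma set_subset_gen: "set xs \<subseteq> gen xs"
proof
  fix x assume "x \<in> set xs"
  then obtain ys zs where "xs = ys @ x # zs" by (meson split_list)
  then have "gen xs = gen (x # zs @ ys)" by (metis gen_append_commute append_Cons)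
  moreover have "x = 1 * x + 0" by simp
  ultimately show "x \<in> gen xs" unfolding gen_Cons using zero_in_gen by blast
qed

lemma dvd_gen: "(\<And>x. x \<in> set xs \<Longrightarrow> d dvd x) \<Longrightarrow> y \<in> gen xs \<Longrightarrow> d dvd y"
  by (induction xs arbitrary: y) (auto simp: gen_Cons)

lemma Gcd_dvd_gen: "y \<in> gen xs \<Longrightarrow> Gcd (set xs) dvd y"
  by (rule dvd_gen) simp_all

lemma gen_mono_subseq: "subseq H G \<Longrightarrow> gen H \<subseteq> gen G"
proof (induction rule: list_emb.induct)
  case (list_emb_Cons xs ys y)
  have "\<forall>z \<in> gen ys. z = 0 * y + z" by simp
  with list_emb_Cons.IH show ?case unfolding gen_Cons by blast
qed (auto simp: gen_Cons)

definition remove_nth :: "nat \<Rightarrow> 'a list \<Rightarrow> 'a list" where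
  "remove_nth i xs = take i xs @ drop (Suc i) xs"

lemma length_remove_nth: "i < length xs \<Longrightarrow> length (remove_nth i xs) < length xs"
  by (simp add: remove_nth_def)

lemma nth_mem_remove_nth:
  assumes "q < length xs" and "q \<noteq> p"
  shows "xs ! q \<in> set (remove_nth p xs)"
proof (cases "q < p")
  case True
  then show ?thesis
    using assms nth_mem[of q "take p xs"] by (simp add: remove_nth_def)
next
  case False
  then show ?thesis
    using assms nth_mem[of "q - Suc p" "drop (Suc p) xs"] by (simp add: remove_nth_def)
qed

lemma subseq_remove_nth: "subseq (remove_nth i xs) xs"
  unfolding remove_nth_def
  by (metis add_Suc add_cancel_left_left append_take_drop_id drop_drop
      list_emb_append2 subseq_append' subseq_order.dual_order.eq_iff)

lemma subseq_remove_nth_if_proper_subseq: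
  "subseq H G \<Longrightarrow> H \<noteq> G \<Longrightarrow> \<exists>i<length G. subseq H (remove_nth i G)"
proof (induction rule: list_emb.induct)
  case (list_emb_Cons xs ys y)
  then show ?case by (intro exI[of _ 0]) (simp add: remove_nth_def)
next
  case (list_emb_Cons2 x y xs ys)
  then obtain i where "i < length ys" "subseq xs (remove_nth i ys)" by auto
  with list_emb_Cons2 show ?case by (intro exI[of _ "Suc i"]) (simp add: remove_nth_def)
qed auto

lemma gen_remove_nth:
  assumes "i < length xs"
  shows "gen xs = {b * xs ! i + s | b s. s \<in> gen (remove_nth i xs)}"
proof -
  have "gen xs = gen (take i xs @ xs ! i # drop (Suc i) xs)"
    using assms by (simp add: id_take_nth_drop[symmetric])
  also have "\<dots> = gen (xs ! i # drop (Suc i) xs @ take i xs)"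
    by (metis gen_append_commute append_Cons)
  also have "\<dots> = {b * xs ! i + s | b s. s \<in> gen (remove_nth i xs)}"
    unfolding gen_Cons remove_nth_def gen_append_commute[of "drop (Suc i) xs"] ..
  finally show ?thesis .
qed

lemma minimal_gens_iff_nth_notin_gen_remove_nth:
  "minimal_gens G \<longleftrightarrow> (\<forall>p<length G. G ! p \<notin> gen (remove_nth p G))"
proof
  assume minimal: "minimal_gens G"
  show "\<forall>p<length G. G ! p \<notin> gen (remove_nth p G)"
  proof (intro allI impI notI)
    fix p assume p: "p < length G" and redundant: "G ! p \<in> gen (remove_nth p G)"
    have "gen G \<subseteq> gen (remove_nth p G)"
      using gen_remove_nth[OF p] gen_add gen_mult[OF redundant] by auto
    then have "gen (remove_nth p G) = gen G"
      using gen_mono_subseq[OF subseq_remove_nth] by blast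
    moreover have "remove_nth p G \<noteq> G" using length_remove_nth[OF p] by auto
    ultimately show False
      using minimal subseq_remove_nth unfolding minimal_gens_def by metis
  qed
next
  assume "\<forall>p<length G. G ! p \<notin> gen (remove_nth p G)"
  moreover have "G ! p \<in> gen G" if "p < length G" for p
    using set_subset_gen nth_mem that by blast
  ultimately show "minimal_gens G"
    unfolding minimal_gens_def
    by (metis subseq_remove_nth_if_proper_subseq gen_mono_subseq subsetD)
qed

lemma div_gcd_dvd_if_dvd_mult:
  fixes d a x :: nat
  assumes "d \<noteq> 0" and "d dvd a * x"
  shows "d div gcd d x dvd a"
proof -
  define e where "e = gcd d x"
  have "e > 0" using assms(1) by (simp add: e_def)
  have "(d div e) * e dvd (a * (x div e)) * e"
    using assms(2) by (simp add: e_def mult.assoc)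
  then have "d div e dvd a * (x div e)"
    using \<open>e > 0\<close> by simp
  moreover have "coprime (d div e) (x div e)"
    using div_gcd_coprime assms(1) unfolding e_def by blast
  ultimately show ?thesis
    by (simp add: e_def coprime_dvd_mult_left_iff)
qed

lemma remove_nth_snoc: "p < length xs \<Longrightarrow> remove_nth p (xs @ [x]) = remove_nth p xs @ [x]"
  by (simp add: remove_nth_def)

lemma nth_notin_gen_remove_nth_snoc:
  fixes xs :: "nat list" and x :: nat
  defines "d \<equiv> Gcd (set xs)"
  defines "c \<equiv> d div gcd d x"
  assumes p: "p < length xs" and independent: "xs ! p \<notin> gen (remove_nth p xs)"
    and "d \<noteq> 0" and h_gen: "c * x \<in> gen xs" and h_neq: "c * x \<noteq> xs ! p"
  shows "xs ! p \<notin> gen (remove_nth p xs @ [x])"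
proof
  let ?g = "xs ! p" and ?R = "gen (remove_nth p xs)"
  assume "?g \<in> gen (remove_nth p xs @ [x])"
  then obtain r a where split: "?g = r + a * x" and "r \<in> ?R"
    unfolding gen_append gen_Cons by auto
  have "d dvd ?g" "d dvd r"
    using Gcd_dvd_gen set_subset_gen nth_mem[OF p] \<open>r \<in> ?R\<close>
      gen_mono_subseq[OF subseq_remove_nth] unfolding d_def by blast+
  then have "d dvd a * x" using split by (simp add: dvd_add_right_iff)
  then obtain t where a: "a = c * t"
    using div_gcd_dvd_if_dvd_mult \<open>d \<noteq> 0\<close> unfolding c_def by blast
  obtain b s where h_split: "c * x = b * ?g + s" and "s \<in> ?R"
    using h_gen gen_remove_nth[OF p] by auto
  consider "t = 0" | "b = 0" | "t \<noteq> 0" "b \<noteq> 0" by blast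
  then show False
  proof cases
    case 1
    then show False using split a \<open>r \<in> ?R\<close> independent by simp
  next
    case 2
    then have "t * (c * x) \<in> ?R" using h_split \<open>s \<in> ?R\<close> gen_mult by simp
    then have "?g \<in> ?R" using split a \<open>r \<in> ?R\<close> gen_add by (simp add: ac_simps)
    with independent show False by simp
  next
    case 3
    have "?g \<le> b * ?g" using \<open>b \<noteq> 0\<close> by simp
    also have "\<dots> \<le> c * x" using h_split by simp
    finally have upper: "?g \<le> c * x" .
    have "c * x \<le> t * (c * x)" using \<open>t \<noteq> 0\<close> by simp
    also have "\<dots> = a * x" using a by simp
    also have "\<dots> \<le> ?g" using split by simp
    finally have "c * x \<le> ?g" .
    with upper show False using h_neq by simp
  qed
qed

lemma minimal_gens_snoc:
  fixes xs :: "nat list" and x :: nat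
  defines "d \<equiv> Gcd (set xs)"
  defines "c \<equiv> d div gcd d x"
  assumes minimal: "minimal_gens xs" and "d \<noteq> 0"
    and h_gen: "c * x \<in> gen xs" and h_notin: "c * x \<notin> set (xs @ [x])"
  shows "minimal_gens (xs @ [x])"
  unfolding minimal_gens_iff_nth_notin_gen_remove_nth
proof (intro allI impI)
  fix p assume "p < length (xs @ [x])"
  then consider "p = length xs" | "p < length xs" by fastforce
  then show "(xs @ [x]) ! p \<notin> gen (remove_nth p (xs @ [x]))"
  proof cases
    case 1
    have "x \<notin> gen xs"
    proof
      assume "x \<in> gen xs"
      then have "d dvd x" unfolding d_def by (rule Gcd_dvd_gen)
      then have "c * x = x" unfolding c_def by (cases "d = 0") auto
      then show False using h_notin by simp
    qed
    with 1 show ?thesis by (simp add: remove_nth_def)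
  next
    case 2
    have "c * x \<noteq> xs ! p" using h_notin 2 by auto
    with 2 show ?thesis
      using nth_notin_gen_remove_nth_snoc[of p xs x] minimal \<open>d \<noteq> 0\<close> h_gen
      unfolding minimal_gens_iff_nth_notin_gen_remove_nth d_def c_def
      by (simp add: nth_append remove_nth_snoc)
  qed
qed

lemma cc_snoc: "j \<le> length xs \<Longrightarrow> cc (xs @ [x]) j = cc xs j"
  by (simp add: cc_def dgcd_def)

lemma cc_snoc_length:
  "cc (xs @ [x]) (Suc (length xs)) = Gcd (set xs) div gcd (Gcd (set xs)) x"
  by (simp add: cc_def dgcd_def gcd.commute)

lemma telescopic_snocD:
  assumes "telescopic (xs @ [x])"
  shows "telescopic xs"
    and "xs \<noteq> [] \<Longrightarrow> cc (xs @ [x]) (Suc (length xs)) * x \<in> gen xs"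
proof -
  show "telescopic xs"
    unfolding telescopic_def
  proof
    fix j assume "j \<in> {2..length xs}"
    with assms have "cc (xs @ [x]) j * (xs @ [x]) ! (j - 1) \<in> gen (take (j - 1) (xs @ [x]))"
      unfolding telescopic_def by auto
    moreover have "j - 1 < length xs" using \<open>j \<in> {2..length xs}\<close> by auto
    ultimately show "cc xs j * xs ! (j - 1) \<in> gen (take (j - 1) xs)"
      by (simp add: cc_snoc nth_append_left)
  qed
  show "cc (xs @ [x]) (Suc (length xs)) * x \<in> gen xs" if "xs \<noteq> []"
  proof -
    have "Suc (length xs) \<in> {2..length (xs @ [x])}"
      using that by (cases xs) auto
    with assms show ?thesis
      unfolding telescopic_def by fastforce
  qed
qed

lemma telescopic_imp_minimal_gens:
  assumes "G \<noteq> []" and "G ! 0 > 0" and "telescopic G"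
    and "\<forall>j\<in>{2..length G}. cc G j * G ! (j - 1) \<notin> set G"
  shows "minimal_gens G"
  using assms
proof (induction G rule: rev_induct)
  case (snoc x xs)
  show ?case
  proof (cases "xs = []")
    case True
    with snoc.prems(2) show ?thesis
      by (simp add: minimal_gens_iff_nth_notin_gen_remove_nth remove_nth_def)
  next
    case False
    have "xs ! 0 > 0" using False snoc.prems(2) by (simp add: nth_append)
    moreover have "\<forall>j\<in>{2..length xs}. cc xs j * xs ! (j - 1) \<notin> set xs"
    proof
      fix j assume j: "j \<in> {2..length xs}"
      with snoc.prems(4) have "cc (xs @ [x]) j * (xs @ [x]) ! (j - 1) \<notin> set (xs @ [x])"
        by simp
      moreover have "j - 1 < length xs" using j by auto
      ultimately show "cc xs j * xs ! (j - 1) \<notin> set xs"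
        by (simp add: cc_snoc nth_append_left)
    qed
    ultimately have "minimal_gens xs"
      using snoc.IH False telescopic_snocD(1)[OF snoc.prems(3)] by blast
    moreover have "Gcd (set xs) \<noteq> 0"
      using \<open>xs ! 0 > 0\<close> False by (metis Gcd_dvd nth_mem dvd_0_left_iff length_greater_0_conv not_gr0)
    moreover have "Suc (length xs) \<in> {2..length (xs @ [x])}"
      using False by (cases xs) auto
    ultimately show ?thesis
      using minimal_gens_snoc telescopic_snocD(2)[OF snoc.prems(3) False] snoc.prems(4)
      by (fastforce simp: cc_snoc_length)
  qed
qed simp

lemma minimal_gens_imp_h_notin_set:
  assumes "minimal_gens G" and "telescopic G" and j: "j \<in> {2..length G}"
  shows "cc G j * G ! (j - 1) \<notin> set G"
proof
  let ?g = "G ! (j - 1)"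
  assume "cc G j * ?g \<in> set G"
  then obtain q where q: "q < length G" "G ! q = cc G j * ?g"
    by (auto simp: in_set_conv_nth)
  have "G ! q \<in> gen (remove_nth q G)"
  proof (cases "q = j - 1")
    case False
    with j have "?g \<in> set (remove_nth q G)" by (auto intro: nth_mem_remove_nth)
    then show ?thesis using q(2) gen_mult set_subset_gen by (metis subsetD)
  next
    case q_eq: True
    show ?thesis
    proof (cases "cc G j = 1")
      case True
      then have "?g \<in> gen (take (j - 1) G)"
        using assms(2) j unfolding telescopic_def by force
      moreover have "subseq (take (j - 1) G) (remove_nth (j - 1) G)"
        unfolding remove_nth_def by auto
      ultimately show ?thesis using q_eq gen_mono_subseq by blast
    next
      case False
      then have "G ! q = 0" using q(2) q_eq by simp
      then show ?thesis by simp
    qed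
  qed
  with assms(1) q(1) show False
    unfolding minimal_gens_iff_nth_notin_gen_remove_nth by blast
qed

lemma ball_one_based_nth_iff_ball_set:
  "(\<forall>i\<in>{1..length xs}. P (xs ! (i - 1))) \<longleftrightarrow> (\<forall>x\<in>set xs. P x)"
  unfolding all_set_conv_all_nth by force

theorem mainTheorem5:
  fixes G :: "nat list"
  assumes "G \<noteq> []" and "G ! 0 > 0" and "telescopic G"
  shows "minimal_gens G \<longleftrightarrow>
    (\<forall>i\<in>{1..length G}. \<forall>j\<in>{2..length G}. G ! (i - 1) \<noteq> cc G j * G ! (j - 1))"
proof -
  have "(\<forall>i\<in>{1..length G}. \<forall>j\<in>{2..length G}. G ! (i - 1) \<noteq> cc G j * G ! (j - 1))
    \<longleftrightarrow> (\<forall>j\<in>{2..length G}. cc G j * G ! (j - 1) \<notin> set G)"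
    using ball_one_based_nth_iff_ball_set[of G "\<lambda>g. \<forall>j\<in>{2..length G}. g \<noteq> cc G j * G ! (j - 1)"]
    by auto
  also have "\<dots> \<longleftrightarrow> minimal_gens G"
    using minimal_gens_imp_h_notin_set[OF _ assms(3)] telescopic_imp_minimal_gens[OF assms]
    by blast
  finally show ?thesis ..
qed

end
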